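(* Let $n\ge1$ and $\nu,\rho\vdash n$. Then \[ LP^n_{\nu,\rho}=\sum_{\lambda,\mu\vdash n}\overline R_{\lambda,\nu}\,\overline R_{\mu,\rho}\,L^n_{\lambda,\mu}, \] where only partitions $\lambda$ refining $\nu$ and $\mu$ refining $\rho$ contribute.
   Context: Work on the set $[n]\cup[\hat n]=\{1,\dots,n,\hat1,\dots,\hat n\}$; permutations are composed right to left, and a pairing is a fixed-point-free involution of this set. Let $f_1=(1\,\hat n)(2\,\hat1)(3\,\hat2)\cdots(n\,\widehat{n-1})$ and $f_2=(1\,\hat1)(2\,\hat2)\cdots(n\,\hat n)$. For a partition $\lambda$, $\lambda\lambda$ denotes the partition with parts $\lambda_1,\lambda_1,\lambda_2,\lambda_2,\dots$ and $\mathcal C_{\lambda\lambda}$ the set of permutations of $[n]\cup[\hat n]$ of cycle type $\lambda\lambda$. $L^n_{\lambda,\mu}$ is the number of pairings $f_3$ with $f_3\circ f_1\in\mathcal C_{\lambda\lambda}$ and $f_3\circ f_2\in\mathcal C_{\mu\mu}$. A set partition of $[n]\cup[\hat n]$ with all blocks of even size has half-type $\lambda$ if its block sizes are $2\lambda_1,2\lambda_2,\dots$; it is stable by a permutation $f$ if $f$ maps each block onto itself. $LP^n_{\lambda,\mu}$ is the number of triples $(f_3,\pi_1,\pi_2)$ where $f_3$ is a pairing, $\pi_1,\pi_2$ are set partitions of $[n]\cup[\hat n]$ with blocks of even size, of half-types $\lambda$ and $\mu$ respectively, $\pi_1$ is stable by $f_1$ and $f_3$, and $\pi_2$ is stable by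 $f_2$ and $f_3$. For partitions $\lambda,\nu\vdash n$, $\overline R_{\lambda,\nu}$ is the number of (unordered) set partitions $\{B_1,\dots,B_{\ell(\nu)}\}$ of $\{1,\dots,\ell(\lambda)\}$ such that the multiset of block sums $\{\sum_{i\in B_j}\lambda_i\}_j$ equals the multiset of parts of $\nu$. *)

theory Defs
  imports "HOL-Combinatorics.Permutations" "HOL-Combinatorics.Orbits"
          "HOL-Library.Multiset" "HOL-Library.Disjoint_Sets"
begin

(* Ground set [n] \<union> [n-hat]: (i, False) encodes i, (i, True) encodes i-hat, 1 \<le> i \<le> n. *)
definition ground :: "nat \<Rightarrow> (nat \<times> bool) set" where
  "ground n = {1..n} \<times> UNIV"

definition is_partition :: "nat \<Rightarrow> nat list \<Rightarrow> bool" where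
  "is_partition n lam \<longleftrightarrow> sorted_wrt (\<ge>) lam \<and> (\<forall>x\<in>set lam. 0 < x) \<and> sum_list lam = n"

definition partitions :: "nat \<Rightarrow> nat list set" where
  "partitions n = {lam. is_partition n lam}"

(* f1 = (1 n^)(2 1^)(3 2^)...(n (n-1)^) *)
definition f1 :: "nat \<Rightarrow> nat \<times> bool \<Rightarrow> nat \<times> bool" where
  "f1 n x = (if x \<in> ground n then
     (case x of (i, False) \<Rightarrow> (if i = 1 then n else i - 1, True)
              | (j, True) \<Rightarrow> (if j = n then 1 else j + 1, False))
     else x)"

definition f2 :: "nat \<Rightarrow> nat \<times> bool \<Rightarrow> nat \<times> bool" where
  "f2 n x = (if x \<in> ground n then (fst x, \<not> snd x) else x)"

definition pairing :: "nat \<Rightarrow> (nat \<times> bool \<Rightarrow> nat \<times> bool) \<Rightarrow> bool" where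
  "pairing n f \<longleftrightarrow> f permutes ground n \<and> (\<forall>x\<in>ground n. f (f x) = x \<and> f x \<noteq> x)"

definition cycle_type :: "'a set \<Rightarrow> ('a \<Rightarrow> 'a) \<Rightarrow> nat multiset" where
  "cycle_type A s = image_mset card (mset_set ((\<lambda>x. orbit s x) ` A))"

definition double_parts :: "nat list \<Rightarrow> nat multiset" where
  "double_parts lam = mset lam + mset lam"

definition L :: "nat \<Rightarrow> nat list \<Rightarrow> nat list \<Rightarrow> nat" where
  "L n lam mu = card {f3. pairing n f3
      \<and> cycle_type (ground n) (f3 \<circ> f1 n) = double_parts lam
      \<and> cycle_type (ground n) (f3 \<circ> f2 n) = double_parts mu}"

definition half_type :: "nat \<Rightarrow> nat list \<Rightarrow> (nat \<times> bool) set set \<Rightarrow> bool" where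
  "half_type n lam P \<longleftrightarrow> partition_on (ground n) P
      \<and> image_mset card (mset_set P) = image_mset (\<lambda>k. 2 * k) (mset lam)"

definition stable :: "('a \<Rightarrow> 'a) \<Rightarrow> 'a set set \<Rightarrow> bool" where
  "stable f P \<longleftrightarrow> (\<forall>B\<in>P. f ` B = B)"

definition LP :: "nat \<Rightarrow> nat list \<Rightarrow> nat list \<Rightarrow> nat" where
  "LP n lam mu = card {(f3, p1, p2). pairing n f3
      \<and> half_type n lam p1 \<and> half_type n mu p2
      \<and> stable (f1 n) p1 \<and> stable f3 p1
      \<and> stable (f2 n) p2 \<and> stable f3 p2}"

(* R-bar: set partitions of the index set {1..l(lam)} (0-based here) whose block sums give nu *)
definition Rbar :: "nat list \<Rightarrow> nat list \<Rightarrow> nat" where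
  "Rbar lam nu = card {P. partition_on {0..<length lam} P
      \<and> image_mset (\<lambda>B. \<Sum>i\<in>B. lam ! i) (mset_set P) = mset nu}"

end

theory Submission
  imports Defs "HOL-Combinatorics.List_Permutation"
begin

(* For two pairings a and b, the involution a conjugates s = a o b into its inverse and maps no
   cycle of s to itself, so the cycles of s come in pairs of equal length. The union of such a pair
   is a block; s has cycle type lam lam, where lam lists the half-sizes of the blocks. A set partition
   is stable under a and b iff it is a union of blocks, so the stable partitions of half-type nu
   correspond to the set partitions of the blocks whose half-size sums are the parts of nu, and there
   are Rbar lam nu of them. Taking (a, b) = (f3, f1) and (f3, f2) and summing over all pairings f3
   gives the identity. *)

lemma image_mset_double_eq_iff:
  "image_mset (\<lambda>k::nat. 2 * k) M = image_mset (\<lambda>k. 2 * k) N \<longleftrightarrow> M = N"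
proof -
  have "image_mset (\<lambda>k. k div 2) (image_mset (\<lambda>k::nat. 2 * k) M) = M" for M
    by (simp add: multiset.map_comp o_def)
  then show ?thesis by metis
qed

lemma mset_add_self_cancel: "M + M = N + (N :: 'a multiset) \<Longrightarrow> M = N"
  by (metis multiset_eq_iff count_union mult_2[symmetric] mult_cancel_left zero_neq_numeral)

lemma card_filter_bij_betw:
  assumes f: "bij_betw f A B" and QR: "\<And>x. x \<in> A \<Longrightarrow> Q (f x) \<longleftrightarrow> R x"
  shows "card {y\<in>B. Q y} = card {x\<in>A. R x}"
proof -
  have "f ` {x\<in>A. R x} = {y\<in>B. Q y}"
    using f QR by (auto simp: bij_betw_def)
  moreover have "inj_on f {x\<in>A. R x}"
    using f by (auto simp: bij_betw_def intro: inj_on_subset)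
  ultimately show ?thesis by (metis card_image)
qed

lemma involution_image_eq:
  assumes "\<And>x. x \<in> B \<Longrightarrow> f x \<in> B" and "\<And>x. x \<in> B \<Longrightarrow> f (f x) = x"
  shows "f ` B = B"
  using assms by (auto intro!: image_eqI[where x = "f x" for x])

lemma involution_permutes:
  assumes "\<And>x. x \<in> S \<Longrightarrow> f x \<in> S" "\<And>x. x \<in> S \<Longrightarrow> f (f x) = x" "\<And>x. x \<notin> S \<Longrightarrow> f x = x"
  shows "f permutes S"
proof (rule bij_imp_permutes)
  show "bij_betw f S S" by (rule bij_betw_byWitness[where f'=f]) (use assms in auto)
qed (use assms in auto)

lemma partition_on_image_of_inj:
  assumes "partition_on A P" and "inj_on f A"
  shows "partition_on (f ` A) ((`) f ` P)"
proof -
  have "{} \<notin> (`) f ` P" using partition_onD3[OF assms(1)] by auto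
  then show ?thesis using partition_on_inj_image[OF assms] by simp
qed

lemma image_image_cancel:
  assumes "\<And>x. x \<in> \<Union>P \<Longrightarrow> h (k x) = x"
  shows "(`) h ` (`) k ` P = P"
proof -
  have "h ` k ` p = p" if "p \<in> P" for p
    using assms that by (force simp: image_image)
  then show ?thesis by (simp add: image_image)
qed

lemma bij_betw_partition_on_image:
  assumes f: "bij_betw f A B"
  shows "bij_betw ((`) ((`) f)) {P. partition_on A P} {Q. partition_on B Q}"
proof (rule bij_betw_byWitness[where f' = "(`) ((`) (inv_into A f))"])
  have g: "bij_betw (inv_into A f) B A" by (rule bij_betw_inv_into[OF f])
  show "\<forall>P\<in>{P. partition_on A P}. (`) (inv_into A f) ` (`) f ` P = P"
  proof clarify
    fix P assume "partition_on A P"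
    then have "\<Union>P = A" by (rule partition_onD1[symmetric])
    with f show "(`) (inv_into A f) ` (`) f ` P = P"
      by (intro image_image_cancel) (auto simp: bij_betw_def inv_into_f_f)
  qed
  show "\<forall>Q\<in>{Q. partition_on B Q}. (`) f ` (`) (inv_into A f) ` Q = Q"
  proof clarify
    fix Q assume "partition_on B Q"
    then have "\<Union>Q = B" by (rule partition_onD1[symmetric])
    with f show "(`) f ` (`) (inv_into A f) ` Q = Q"
      by (intro image_image_cancel) (auto simp: bij_betw_def f_inv_into_f)
  qed
  show "(`) ((`) f) ` {P. partition_on A P} \<subseteq> {Q. partition_on B Q}"
    using partition_on_image_of_inj f by (fastforce simp: bij_betw_def)
  show "(`) ((`) (inv_into A f)) ` {Q. partition_on B Q} \<subseteq> {P. partition_on A P}"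
    using partition_on_image_of_inj g by (fastforce simp: bij_betw_def)
qed

lemma blocks_below_Union:
  assumes "partition_on A P" and "X \<subseteq> P"
  shows "{p \<in> P. p \<subseteq> \<Union>X} = X"
proof (intro equalityI subsetI)
  fix p assume p: "p \<in> {p \<in> P. p \<subseteq> \<Union>X}"
  have "p \<noteq> {}" using p partition_onD3[OF assms(1)] by auto
  then obtain z where "z \<in> p" by blast
  then obtain q where q: "q \<in> X" "z \<in> q" using p by blast
  then have "p = q"
    using p assms(2) \<open>z \<in> p\<close> disjointD[OF partition_onD2[OF assms(1)]] by blast
  then show "p \<in> X" using q by simp
qed (use assms in auto)

lemma inj_on_Union_Pow:
  assumes "partition_on A P"
  shows "inj_on Union (Pow P)"
  by (rule inj_on_inverseI[where g = "\<lambda>U. {p \<in> P. p \<subseteq> U}"]) (use blocks_below_Union assms in blast)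

lemma partition_on_Union_image:
  assumes P: "partition_on A P" and Q: "partition_on P Q"
  shows "partition_on A (Union ` Q)"
proof (rule partition_onI)
  show "\<Union> (Union ` Q) = A"
    using partition_onD1[OF P] partition_onD1[OF Q] by blast
  show "{} \<notin> Union ` Q"
  proof
    assume "{} \<in> Union ` Q"
    then obtain X where "X \<in> Q" "\<Union>X = {}" by auto
    moreover from \<open>X \<in> Q\<close> have "X \<noteq> {}" "X \<subseteq> P"
      using partition_onD3[OF Q] partition_onD1[OF Q] by auto
    ultimately show False using partition_onD3[OF P] by auto
  qed
  fix X Y assume "X \<in> Union ` Q" "Y \<in> Union ` Q" "X \<noteq> Y"
  then obtain x y where xy: "x \<in> Q" "y \<in> Q" "x \<noteq> y" and XY: "X = \<Union>x" "Y = \<Union>y"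
    by blast
  have "x \<inter> y = {}" using disjointD[OF partition_onD2[OF Q] xy] .
  then have "p \<inter> q = {}" if "p \<in> x" "q \<in> y" for p q
    using that xy(1,2) partition_onD1[OF Q] disjointD[OF partition_onD2[OF P]] by blast
  then show "disjnt X Y" unfolding XY disjnt_def by blast
qed

lemma Union_blocks_below:
  assumes "refines A P R" and "B \<in> R"
  shows "\<Union>{p \<in> P. p \<subseteq> B} = B"
  using partition_onD1[OF refines_obtains_subset[OF assms]] by simp

lemma partition_on_blocks_below:
  assumes P: "partition_on A P" and R: "refines A P R"
  shows "partition_on P ((\<lambda>B. {p \<in> P. p \<subseteq> B}) ` R)"
proof (rule partition_onI)
  show "\<Union> ((\<lambda>B. {p \<in> P. p \<subseteq> B}) ` R) = P"
    using R by (auto simp: refines_def)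
  show "{} \<notin> (\<lambda>B. {p \<in> P. p \<subseteq> B}) ` R"
  proof
    assume "{} \<in> (\<lambda>B. {p \<in> P. p \<subseteq> B}) ` R"
    then obtain B where B: "B \<in> R" "{p \<in> P. p \<subseteq> B} = {}" by auto
    then have "B = {}" by (metis Union_blocks_below[OF R B(1)] Union_empty)
    with B have "{} \<in> R" by simp
    then show False using R partition_onD3 unfolding refines_def by blast
  qed
  fix X Y assume "X \<in> (\<lambda>B. {p \<in> P. p \<subseteq> B}) ` R" "Y \<in> (\<lambda>B. {p \<in> P. p \<subseteq> B}) ` R" "X \<noteq> Y"
  then obtain B C where BC: "B \<in> R" "C \<in> R" "B \<noteq> C"
    and XY: "X = {p \<in> P. p \<subseteq> B}" "Y = {p \<in> P. p \<subseteq> C}"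
    by blast
  have "B \<inter> C = {}"
    using R BC disjointD partition_onD2 unfolding refines_def by metis
  then have "p = {}" if "p \<subseteq> B" "p \<subseteq> C" for p
    using that by blast
  then show "disjnt X Y"
    unfolding XY disjnt_def using partition_onD3[OF P] by blast
qed

lemma bij_betw_Union_refines:
  assumes P: "partition_on A P"
  shows "bij_betw ((`) Union) {Q. partition_on P Q} {R. refines A P R}"
proof (rule bij_betw_byWitness[where f' = "(`) (\<lambda>B. {p \<in> P. p \<subseteq> B})"])
  show "\<forall>Q\<in>{Q. partition_on P Q}. (\<lambda>B. {p \<in> P. p \<subseteq> B}) ` Union ` Q = Q"
  proof clarify
    fix Q assume Q: "partition_on P Q"
    have "X \<subseteq> P" if "X \<in> Q" for X
      using partition_onD1[OF Q] that by blast
    then have "\<forall>X\<in>Q. {p \<in> P. p \<subseteq> \<Union>X} = X"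
      using blocks_below_Union[OF P] by blast
    then show "(\<lambda>B. {p \<in> P. p \<subseteq> B}) ` Union ` Q = Q" by (simp add: image_image)
  qed
  show "\<forall>R\<in>{R. refines A P R}. Union ` (\<lambda>B. {p \<in> P. p \<subseteq> B}) ` R = R"
  proof clarify
    fix R assume "refines A P R"
    then have "\<forall>B\<in>R. \<Union>{p \<in> P. p \<subseteq> B} = B" using Union_blocks_below by blast
    then show "Union ` (\<lambda>B. {p \<in> P. p \<subseteq> B}) ` R = R" by (simp add: image_image)
  qed
  show "(`) Union ` {Q. partition_on P Q} \<subseteq> {R. refines A P R}"
  proof clarify
    fix Q assume Q: "partition_on P Q"
    show "refines A P (Union ` Q)"
      using P partition_on_Union_image[OF P Q] partition_onD1[OF Q] by (auto simp: refines_def)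
  qed
  show "(`) (\<lambda>B. {p \<in> P. p \<subseteq> B}) ` {R. refines A P R} \<subseteq> {Q. partition_on P Q}"
    using partition_on_blocks_below[OF P] by blast
qed

lemma card_Union_image_disjoint:
  assumes "partition_on G Oc" "finite G" "inj_on c B" "c ` B \<subseteq> Oc" "finite B"
  shows "card (\<Union>(c ` B)) = (\<Sum>i\<in>B. card (c i))"
proof (rule card_UN_disjoint'[OF _ _ assms(5)])
  show "disjoint_family_on c B"
    unfolding disjoint_family_on_def
  proof (intro ballI impI)
    fix i j assume "i \<in> B" "j \<in> B" "i \<noteq> j"
    then have "c i \<noteq> c j" "c i \<in> Oc" "c j \<in> Oc"
      using assms(3,4) by (auto dest: inj_onD)
    then show "c i \<inter> c j = {}"
      using disjointD[OF partition_onD2[OF assms(1)]] by blast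
  qed
  show "finite (c i)" if "i \<in> B" for i
  proof (rule finite_subset[OF _ assms(2)])
    show "c i \<subseteq> G" using that assms(4) partition_onD1[OF assms(1)] by blast
  qed
qed

lemma bij_betw_partition_on_refines:
  assumes Oc: "partition_on G Oc" and c: "bij_betw c I Oc"
  shows "bij_betw ((`) (\<lambda>B. \<Union>(c ` B))) {P. partition_on I P} {p. refines G Oc p}"
proof -
  have "bij_betw ((`) Union \<circ> (`) ((`) c)) {P. partition_on I P} {p. refines G Oc p}"
    by (rule bij_betw_trans[OF bij_betw_partition_on_image[OF c] bij_betw_Union_refines[OF Oc]])
  then show ?thesis by (simp add: o_def image_image)
qed

lemma inj_on_UN_image_Pow:
  assumes Oc: "partition_on G Oc" and c: "bij_betw c I Oc"
  shows "inj_on (\<lambda>B. \<Union>(c ` B)) (Pow I)"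
proof -
  have "inj_on (Union \<circ> (`) c) (Pow I)"
  proof (rule comp_inj_on)
    show "inj_on ((`) c) (Pow I)" using c inj_on_image_Pow by (auto simp: bij_betw_def)
    show "inj_on Union ((`) c ` Pow I)"
      using c inj_on_Union_Pow[OF Oc] by (simp add: bij_betw_def image_Pow_surj)
  qed
  then show ?thesis by (simp add: o_def)
qed

lemma card_refines_half_type_eq_Rbar:
  assumes G: "finite G" and Oc: "partition_on G Oc"
    and c: "bij_betw c {..<length lam} Oc"
    and card_c: "\<And>i. i < length lam \<Longrightarrow> card (c i) = 2 * lam ! i"
  shows "card {p. refines G Oc p \<and> image_mset card (mset_set p) = image_mset (\<lambda>k. 2 * k) (mset nu)}
    = Rbar lam nu"
proof -
  define I where "I = {0..<length lam}"
  define U where "U = (\<lambda>B. \<Union>(c ` B))"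
  have cI: "bij_betw c I Oc" using c by (simp add: I_def atLeast0LessThan)
  have bij: "bij_betw ((`) U) {P. partition_on I P} {p. refines G Oc p}"
    unfolding U_def by (rule bij_betw_partition_on_refines[OF Oc cI])
  have U_inj: "inj_on U (Pow I)"
    unfolding U_def by (rule inj_on_UN_image_Pow[OF Oc cI])
  have card_U: "card (U B) = 2 * (\<Sum>i\<in>B. lam ! i)" if "B \<subseteq> I" for B
  proof -
    have "card (U B) = (\<Sum>i\<in>B. card (c i))"
      unfolding U_def using that cI G Oc
      by (intro card_Union_image_disjoint) (auto simp: bij_betw_def I_def intro: inj_on_subset finite_subset)
    also have "\<dots> = (\<Sum>i\<in>B. 2 * lam ! i)"
      using that card_c by (intro sum.cong) (auto simp: I_def)
    finally show ?thesis by (simp add: sum_distrib_left)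
  qed
  have weight: "image_mset card (mset_set (U ` P))
      = image_mset (\<lambda>k. 2 * k) (image_mset (\<lambda>B. \<Sum>i\<in>B. lam ! i) (mset_set P))"
    if P: "partition_on I P" for P
  proof -
    have PI: "P \<subseteq> Pow I" using partition_onD1[OF P] by blast
    then have "mset_set (U ` P) = image_mset U (mset_set P)"
      using U_inj by (metis image_mset_mset_set inj_on_subset)
    moreover have "finite P" using PI finite_subset by (auto simp: I_def)
    ultimately show ?thesis
      using PI card_U by (auto simp: multiset.map_comp o_def intro!: image_mset_cong)
  qed
  have "card {p. refines G Oc p \<and> image_mset card (mset_set p) = image_mset (\<lambda>k. 2 * k) (mset nu)}
      = card {P \<in> {P. partition_on I P}. image_mset (\<lambda>B. \<Sum>i\<in>B. lam ! i) (mset_set P) = mset nu}"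
    using card_filter_bij_betw[OF bij, where Q = "\<lambda>p. image_mset card (mset_set p) = image_mset (\<lambda>k. 2 * k) (mset nu)"]
    by (simp add: weight image_mset_double_eq_iff)
  then show ?thesis by (simp add: Rbar_def I_def)
qed

lemma obtain_bij_betw_indexing:
  assumes "finite A" and "image_mset h (mset_set A) = mset xs"
  obtains c where "bij_betw c {..<length xs} A" and "\<And>i. i < length xs \<Longrightarrow> h (c i) = xs ! i"
proof -
  obtain cs where cs: "set cs = A" "distinct cs" using finite_distinct_list[OF assms(1)] by blast
  then have "mset xs = mset (map h cs)" using assms(2) mset_set_set[OF cs(2)] by simp
  then obtain f where f: "bij_betw f {..<length xs} {..<length (map h cs)}"
      and f_nth: "\<forall>i<length xs. xs ! i = map h cs ! f i"
    using permutation_Ex_bij by blast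
  have "bij_betw ((!) cs \<circ> f) {..<length xs} A"
    using bij_betw_trans[OF f bij_betw_nth[OF cs(2) _ cs(1)[symmetric]]] by simp
  moreover have "h (((!) cs \<circ> f) i) = xs ! i" if "i < length xs" for i
  proof -
    have "f i < length cs" using f that by (auto simp: bij_betw_def)
    then show ?thesis using f_nth that by simp
  qed
  ultimately show thesis using that by blast
qed

locale two_pairings =
  fixes G :: "'a set" and a b :: "'a \<Rightarrow> 'a"
  assumes finite_G: "finite G"
    and a_permutes: "a permutes G" and b_permutes: "b permutes G"
    and a_a: "\<And>x. x \<in> G \<Longrightarrow> a (a x) = x" and a_neq: "\<And>x. x \<in> G \<Longrightarrow> a x \<noteq> x"
    and b_b: "\<And>x. x \<in> G \<Longrightarrow> b (b x) = x" and b_neq: "\<And>x. x \<in> G \<Longrightarrow> b x \<noteq> x"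
begin

definition s :: "'a \<Rightarrow> 'a" where "s = a \<circ> b"

lemma s_permutes: "s permutes G"
  unfolding s_def by (intro permutes_compose a_permutes b_permutes)

lemma permutation_s: "permutation s"
  using s_permutes finite_G permutation_permutes by blast

lemma a_in: "x \<in> G \<Longrightarrow> a x \<in> G"
  using a_permutes by (simp add: permutes_in_image)

lemma b_in: "x \<in> G \<Longrightarrow> b x \<in> G"
  using b_permutes by (simp add: permutes_in_image)

lemma funpow_s_in: "x \<in> G \<Longrightarrow> (s ^^ k) x \<in> G"
  using s_permutes by (induct k) (auto simp: permutes_in_image)

lemma self_in_orbit_s: "x \<in> orbit s x"
  by (rule permutation_self_in_orbit[OF permutation_s])

lemma orbit_s_eq: "y \<in> orbit s x \<Longrightarrow> orbit s y = orbit s x"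
  by (rule orbit_cyclic_eq3[OF cyclic_on_orbit'[OF permutation_s]])

lemma orbit_s_funpow: "orbit s x = {(s ^^ k) x | k. True}"
  by (rule orbit_altdef_permutation[OF permutation_s])

lemma orbit_s_subset: "x \<in> G \<Longrightarrow> orbit s x \<subseteq> G"
  by (rule permutes_orbit_subset[OF s_permutes])

lemma finite_orbit_s: "x \<in> G \<Longrightarrow> finite (orbit s x)"
  using orbit_s_subset finite_G finite_subset by blast

lemma b_eq_a_s: "x \<in> G \<Longrightarrow> b x = a (s x)"
  unfolding s_def using a_a b_in by simp

text \<open>The involution \<open>a\<close> conjugates \<open>s\<close> into its inverse.\<close>

lemma funpow_s_a_funpow_s: "x \<in> G \<Longrightarrow> (s ^^ k) (a ((s ^^ k) x)) = a x"
proof (induct k)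
  case (Suc k)
  have "s (a (s y)) = a y" if "y \<in> G" for y
    unfolding s_def using that a_a b_b b_in by simp
  then have "(s ^^ k) (s (a (s ((s ^^ k) x)))) = (s ^^ k) (a ((s ^^ k) x))"
    using funpow_s_in Suc.prems by simp
  then show ?case using Suc by (simp add: funpow_swap1)
qed simp

lemma a_in_orbit_a: assumes "x \<in> G" "y \<in> orbit s x" shows "a y \<in> orbit s (a x)"
proof -
  obtain k where y: "y = (s ^^ k) x" using assms(2) orbit_s_funpow by auto
  have "a x = (s ^^ k) (a y)" using funpow_s_a_funpow_s[OF assms(1), of k] y by simp
  then have "a x \<in> orbit s (a y)" unfolding orbit_s_funpow[of "a y"] by blast
  then show ?thesis using orbit_s_eq self_in_orbit_s by metis
qed

text \<open>If \<open>a x = s\<^sup>k x\<close>, then according to the parity of \<open>k\<close> either \<open>a\<close> or \<open>b\<close> fixes the point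
  \<open>s\<^sup>j x\<close> with \<open>j = \<lfloor>k/2\<rfloor>\<close>.\<close>

lemma a_notin_orbit: assumes x: "x \<in> G" shows "a x \<notin> orbit s x"
proof
  assume "a x \<in> orbit s x"
  then obtain k where k: "a x = (s ^^ k) x" using orbit_s_funpow by auto
  have inj: "inj (s ^^ j)" for j
    using permutation_s inj_fn permutation_bijective bij_is_inj by blast
  define y where "y j = (s ^^ j) x" for j
  have y_in: "y j \<in> G" for j using funpow_s_in x y_def by simp
  show False
  proof (cases "even k")
    case True
    then obtain j where j: "k = j + j" by (metis evenE mult_2)
    have "(s ^^ j) (a (y j)) = (s ^^ j) (y j)"
      using funpow_s_a_funpow_s[OF x, of j] k j by (simp add: y_def funpow_add)
    then have "a (y j) = y j" using inj injD by metis
    then show False using a_neq y_in by blast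
  next
    case False
    then obtain j where j: "k = Suc (j + j)" by (metis oddE mult_2 Suc_eq_plus1)
    have "(s ^^ Suc j) (b (y j)) = a x"
      using b_eq_a_s[OF y_in] funpow_s_a_funpow_s[OF x, of "Suc j"] by (simp add: y_def)
    also have "\<dots> = (s ^^ Suc j) (y j)" using k j by (simp add: y_def funpow_add)
    finally have "b (y j) = y j" using inj injD by metis
    then show False using b_neq y_in by blast
  qed
qed

lemma card_orbit_a: assumes x: "x \<in> G" shows "card (orbit s (a x)) = card (orbit s x)"
proof -
  have "a ` orbit s x = orbit s (a x)"
  proof (intro equalityI subsetI)
    fix y assume "y \<in> orbit s (a x)"
    then have "a y \<in> orbit s x" "a (a y) = y"
      using a_in_orbit_a[OF a_in[OF x]] a_a[OF x] a_a orbit_s_subset[OF a_in[OF x]] by auto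
    then show "y \<in> a ` orbit s x" by (metis imageI)
  qed (use a_in_orbit_a[OF x] in blast)
  moreover have "inj_on a (orbit s x)" using a_permutes permutes_inj by (blast intro: inj_on_subset)
  ultimately show ?thesis by (metis card_image)
qed

definition block :: "'a \<Rightarrow> 'a set" where "block x = orbit s x \<union> orbit s (a x)"

definition blocks :: "'a set set" where "blocks = block ` G"

definition half_block_sizes :: "nat multiset" where
  "half_block_sizes = image_mset (\<lambda>B. card B div 2) (mset_set blocks)"

lemma self_in_block: "x \<in> block x"
  unfolding block_def using self_in_orbit_s by blast

lemma a_in_block: "a x \<in> block x"
  unfolding block_def using self_in_orbit_s by blast

lemma b_in_block: assumes "x \<in> G" shows "b x \<in> block x"
proof -
  have "a (s x) \<in> orbit s (a x)" using a_in_orbit_a[OF assms] orbit.base by metis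
  then show ?thesis unfolding block_def using b_eq_a_s assms by simp
qed

lemma block_subset: "x \<in> G \<Longrightarrow> block x \<subseteq> G"
  unfolding block_def using orbit_s_subset a_in by blast

lemma block_eq: assumes x: "x \<in> G" and z: "z \<in> block x" shows "block z = block x"
proof (cases "z \<in> orbit s x")
  case True
  then have "orbit s (a z) = orbit s (a x)" using a_in_orbit_a[OF x] orbit_s_eq by blast
  then show ?thesis using orbit_s_eq[OF True] unfolding block_def by simp
next
  case False
  then have z': "z \<in> orbit s (a x)" using z unfolding block_def by blast
  then have "a z \<in> orbit s x" using a_in_orbit_a[OF a_in[OF x] z'] a_a x by simp
  then show ?thesis using orbit_s_eq z' unfolding block_def by blast
qed

lemma card_block: assumes x: "x \<in> G" shows "card (block x) = 2 * card (orbit s x)"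
proof -
  have "orbit s x \<inter> orbit s (a x) = {}"
    using a_notin_orbit[OF x] orbit_s_eq self_in_orbit_s by (metis disjoint_iff)
  then have "card (block x) = card (orbit s x) + card (orbit s (a x))"
    unfolding block_def using finite_orbit_s x a_in by (simp add: card_Un_disjoint)
  then show ?thesis using card_orbit_a[OF x] by simp
qed

lemma blocks_meet_eq: "B \<in> blocks \<Longrightarrow> C \<in> blocks \<Longrightarrow> x \<in> B \<Longrightarrow> x \<in> C \<Longrightarrow> B = C"
  unfolding blocks_def using block_eq by blast

lemma partition_on_blocks: "partition_on G blocks"
proof (rule partition_onI)
  show "\<Union>blocks = G" unfolding blocks_def using block_subset self_in_block by blast
  show "{} \<notin> blocks" unfolding blocks_def using self_in_block by blast
  show "disjnt B C" if "B \<in> blocks" "C \<in> blocks" "B \<noteq> C" for B C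
    using blocks_meet_eq that by (auto simp: disjnt_def)
qed

lemma stable_iff_refines_blocks:
  assumes p: "partition_on G p"
  shows "stable b p \<and> stable a p \<longleftrightarrow> refines G blocks p"
proof
  assume "stable b p \<and> stable a p"
  then have closed: "a x \<in> B" "s x \<in> B" if "B \<in> p" "x \<in> B" for B x
    using that unfolding stable_def s_def by (metis imageI, metis comp_apply imageI)
  have block_sub: "block x \<subseteq> B" if B: "B \<in> p" "x \<in> B" for B x
  proof -
    have "orbit s y \<subseteq> B" if "y \<in> B" for y
    proof
      fix z assume "z \<in> orbit s y"
      then show "z \<in> B" by (induct rule: orbit.induct) (use closed B \<open>y \<in> B\<close> in auto)
    qed
    then show ?thesis unfolding block_def using closed B by blast
  qed
  have "\<exists>B\<in>p. block x \<subseteq> B" if x: "x \<in> G" for x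
  proof -
    obtain B where "B \<in> p" "x \<in> B" using x partition_onD1[OF p] by auto
    then show ?thesis using block_sub by blast
  qed
  then show "refines G blocks p"
    unfolding refines_def using p partition_on_blocks by (simp add: blocks_def)
next
  assume refines: "refines G blocks p"
  have in_B: "block x \<subseteq> B" if "B \<in> p" "x \<in> B" for B x
  proof -
    have "x \<in> G" using that partition_onD1[OF p] by blast
    then obtain C where C: "C \<in> p" "block x \<subseteq> C"
      using refines unfolding refines_def blocks_def by blast
    then have "x \<in> C \<inter> B" using that self_in_block by blast
    then have "C = B" using disjointD[OF partition_onD2[OF p] C(1) \<open>B \<in> p\<close>] by blast
    then show ?thesis using C by simp
  qed
  have "x \<in> G" if "B \<in> p" "x \<in> B" for B x
    using that partition_onD1[OF p] by blast
  then have "a ` B = B \<and> b ` B = B" if "B \<in> p" for B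
    using that in_B a_in_block b_in_block a_a b_b
    by (intro conjI involution_image_eq) blast+
  then show "stable b p \<and> stable a p" unfolding stable_def by blast
qed

lemma finite_blocks: "finite blocks"
  unfolding blocks_def using finite_G by simp

lemma card_block_half: assumes "B \<in> blocks" shows "card B = 2 * (card B div 2)" and "0 < card B div 2"
proof -
  obtain x where x: "x \<in> G" "B = block x" using assms unfolding blocks_def by blast
  moreover have "0 < card (orbit s x)"
    using finite_orbit_s[OF x(1)] self_in_orbit_s by (auto simp: card_gt_0_iff)
  ultimately show "card B = 2 * (card B div 2)" "0 < card B div 2"
    using card_block by auto
qed

definition rep :: "'a set \<Rightarrow> 'a" where "rep = inv_into G block"

lemma rep_in: "B \<in> blocks \<Longrightarrow> rep B \<in> G"
  unfolding rep_def blocks_def by (rule inv_into_into)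

lemma block_rep: "B \<in> blocks \<Longrightarrow> block (rep B) = B"
  unfolding rep_def blocks_def by (rule f_inv_into_f)

lemma orbits_s_eq:
  "(\<lambda>x. orbit s x) ` G = (\<lambda>B. orbit s (rep B)) ` blocks \<union> (\<lambda>B. orbit s (a (rep B))) ` blocks"
proof (intro equalityI subsetI)
  fix X assume "X \<in> (\<lambda>x. orbit s x) ` G"
  then obtain x where x: "x \<in> G" "X = orbit s x" by blast
  have B: "block x \<in> blocks" using x(1) unfolding blocks_def by blast
  then have "x \<in> orbit s (rep (block x)) \<union> orbit s (a (rep (block x)))"
    using self_in_block block_rep unfolding block_def by metis
  then show "X \<in> (\<lambda>B. orbit s (rep B)) ` blocks \<union> (\<lambda>B. orbit s (a (rep B))) ` blocks"
    using B x(2) orbit_s_eq by blast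
qed (use rep_in a_in in blast)

lemma rep_orbits_subset:
  assumes "B \<in> blocks" shows "orbit s (rep B) \<subseteq> B" and "orbit s (a (rep B)) \<subseteq> B"
  using block_rep[OF assms] unfolding block_def by blast+

lemma inj_on_rep_orbits:
  shows "inj_on (\<lambda>B. orbit s (rep B)) blocks" and "inj_on (\<lambda>B. orbit s (a (rep B))) blocks"
proof (rule_tac [!] inj_onI)
  fix B C assume "B \<in> blocks" "C \<in> blocks"
  then show "orbit s (rep B) = orbit s (rep C) \<Longrightarrow> B = C"
    and "orbit s (a (rep B)) = orbit s (a (rep C)) \<Longrightarrow> B = C"
    using rep_orbits_subset self_in_orbit_s blocks_meet_eq by (metis subsetD)+
qed

lemma rep_orbits_disjoint:
  "(\<lambda>B. orbit s (rep B)) ` blocks \<inter> (\<lambda>B. orbit s (a (rep B))) ` blocks = {}"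
proof (rule ccontr)
  assume "(\<lambda>B. orbit s (rep B)) ` blocks \<inter> (\<lambda>B. orbit s (a (rep B))) ` blocks \<noteq> {}"
  then obtain B C where BC: "B \<in> blocks" "C \<in> blocks" "orbit s (rep B) = orbit s (a (rep C))" by auto
  then have "rep B \<in> B \<inter> C" using rep_orbits_subset self_in_orbit_s by blast
  then have "B = C" using BC blocks_meet_eq by blast
  then have "a (rep B) \<in> orbit s (rep B)" using BC self_in_orbit_s by simp
  then show False using a_notin_orbit rep_in BC(1) by blast
qed

lemma card_rep_orbits:
  assumes "B \<in> blocks"
  shows "card (orbit s (rep B)) = card B div 2" and "card (orbit s (a (rep B))) = card B div 2"
  using card_block[OF rep_in[OF assms]] card_orbit_a[OF rep_in[OF assms]]
  unfolding block_rep[OF assms] by simp_all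

lemma cycle_type_s: "cycle_type G s = half_block_sizes + half_block_sizes"
proof -
  have "mset_set ((\<lambda>x. orbit s x) ` G)
      = image_mset (\<lambda>B. orbit s (rep B)) (mset_set blocks) + image_mset (\<lambda>B. orbit s (a (rep B))) (mset_set blocks)"
    unfolding orbits_s_eq using inj_on_rep_orbits rep_orbits_disjoint
    by (simp add: mset_set_Union finite_blocks image_mset_mset_set)
  moreover have "image_mset card (image_mset (\<lambda>B. orbit s (rep B)) (mset_set blocks)) = half_block_sizes"
    and "image_mset card (image_mset (\<lambda>B. orbit s (a (rep B))) (mset_set blocks)) = half_block_sizes"
    unfolding half_block_sizes_def using card_rep_orbits finite_blocks
    by (auto simp: multiset.map_comp intro!: image_mset_cong)
  ultimately show ?thesis unfolding cycle_type_def by simp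
qed

lemma sum_half_block_sizes: "2 * sum_mset half_block_sizes = card G"
proof -
  have "card G = (\<Sum>B\<in>blocks. card B)"
    using product_partition[OF partition_on_blocks] partition_onD1[OF partition_on_blocks] finite_G
    by (metis Union_upper finite_subset)
  also have "\<dots> = (\<Sum>B\<in>blocks. 2 * (card B div 2))"
    using card_block_half(1) by (rule sum.cong[OF refl])
  finally have "card G = 2 * (\<Sum>B\<in>blocks. card B div 2)"
    by (simp add: sum_distrib_left)
  then show ?thesis by (simp add: half_block_sizes_def sum_unfold_sum_mset)
qed

lemma is_partition_half_block_sizes:
  "is_partition (card G div 2) (rev (sorted_list_of_multiset half_block_sizes))"
  unfolding is_partition_def
proof (intro conjI ballI)
  show "sorted_wrt (\<ge>) (rev (sorted_list_of_multiset half_block_sizes))"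
    by (simp add: sorted_wrt_rev)
  show "0 < k" if "k \<in> set (rev (sorted_list_of_multiset half_block_sizes))" for k
  proof -
    have "k \<in># half_block_sizes" using that by simp
    then obtain B where "B \<in> blocks" "k = card B div 2"
      using finite_blocks unfolding half_block_sizes_def by auto
    then show ?thesis using card_block_half(2) by simp
  qed
  show "sum_list (rev (sorted_list_of_multiset half_block_sizes)) = card G div 2"
    using sum_half_block_sizes by (simp flip: sum_mset_sum_list)
qed

lemma card_stable_partitions_eq_Rbar:
  assumes "mset lam = half_block_sizes"
  shows "card {p. partition_on G p \<and> image_mset card (mset_set p) = image_mset (\<lambda>k. 2 * k) (mset nu)
      \<and> stable b p \<and> stable a p} = Rbar lam nu"
proof -
  have "image_mset (\<lambda>B. card B div 2) (mset_set blocks) = mset lam"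
    using assms by (simp add: half_block_sizes_def)
  then obtain c where c: "bij_betw c {..<length lam} blocks"
    and c_half: "\<And>i. i < length lam \<Longrightarrow> card (c i) div 2 = lam ! i"
    using obtain_bij_betw_indexing[OF finite_blocks] by blast
  have card_c: "card (c i) = 2 * lam ! i" if "i < length lam" for i
  proof -
    have "c i \<in> blocks" using bij_betw_apply[OF c] that by simp
    then show ?thesis using card_block_half(1) c_half[OF that] by metis
  qed
  have "partition_on G p \<and> stable b p \<and> stable a p \<longleftrightarrow> refines G blocks p" for p
    using stable_iff_refines_blocks unfolding refines_def by blast
  then have "{p. partition_on G p \<and> image_mset card (mset_set p) = image_mset (\<lambda>k. 2 * k) (mset nu)
      \<and> stable b p \<and> stable a p}
    = {p. refines G blocks p \<and> image_mset card (mset_set p) = image_mset (\<lambda>k. 2 * k) (mset nu)}"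
    by blast
  then show ?thesis
    using card_refines_half_type_eq_Rbar[OF finite_G partition_on_blocks c card_c] by simp
qed

end

lemma finite_ground: "finite (ground n)"
  unfolding ground_def by simp

lemma card_ground: "card (ground n) = 2 * n"
  unfolding ground_def by (simp add: card_cartesian_product)

lemma pairing_two_pairings: "pairing n f \<Longrightarrow> pairing n g \<Longrightarrow> two_pairings (ground n) f g"
  unfolding pairing_def by unfold_locales (auto simp: finite_ground)

lemma pairing_f1: "pairing n (f1 n)"
proof -
  have f1_in: "f1 n x \<in> ground n" if "x \<in> ground n" for x
    using that by (cases x) (auto simp: f1_def ground_def split: bool.splits)
  have f1_f1: "f1 n (f1 n x) = x" if "x \<in> ground n" for x
  proof -
    obtain i t where x: "x = (i, t)" by (cases x)
    show ?thesis using that f1_in[OF that] unfolding x by (cases t) (auto simp: f1_def ground_def)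
  qed
  have "f1 n permutes ground n"
    by (rule involution_permutes) (use f1_in f1_f1 in \<open>auto simp: f1_def\<close>)
  moreover have "f1 n x \<noteq> x" if "x \<in> ground n" for x
    using that by (cases x) (auto simp: f1_def split: bool.splits)
  ultimately show ?thesis unfolding pairing_def using f1_f1 by blast
qed

lemma pairing_f2: "pairing n (f2 n)"
proof -
  have "f2 n permutes ground n"
    by (rule involution_permutes) (auto simp: f2_def ground_def)
  then show ?thesis unfolding pairing_def by (auto simp: f2_def ground_def)
qed

lemma finite_pairings: "finite {f. pairing n f}"
  by (rule finite_subset[OF _ finite_permutations[OF finite_ground]]) (auto simp: pairing_def)

lemma finite_partitions: "finite (partitions n)"
proof (rule finite_subset)
  have "length xs \<le> sum_list xs" if "\<forall>x\<in>set xs. (0::nat) < x" for xs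
    using that by (induct xs) auto
  then show "partitions n \<subseteq> {xs. set xs \<subseteq> {0..n} \<and> length xs \<le> n}"
    unfolding partitions_def is_partition_def using member_le_sum_list by fastforce
  show "finite {xs. set xs \<subseteq> {0..n} \<and> length xs \<le> n}"
    by (rule finite_lists_length_le) simp
qed

lemma double_parts_inj:
  assumes "is_partition n lam" "is_partition n mu" "double_parts lam = double_parts mu"
  shows "lam = mu"
proof -
  have "mset (rev lam) = mset (rev mu)"
    using assms(3) mset_add_self_cancel unfolding double_parts_def by simp
  moreover have "sorted (rev lam)" "sorted (rev mu)"
    using assms(1,2) unfolding is_partition_def by (simp_all add: sorted_wrt_rev)
  ultimately show ?thesis by (metis properties_for_sort rev_rev_ident)
qed

definition stable_partitions ::
    "nat \<Rightarrow> nat list \<Rightarrow> (nat \<times> bool \<Rightarrow> nat \<times> bool) \<Rightarrow> (nat \<times> bool \<Rightarrow> nat \<times> bool) \<Rightarrow> (nat \<times> bool) set set set"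
  where "stable_partitions n lam f g = {p. half_type n lam p \<and> stable f p \<and> stable g p}"

lemma finite_stable_partitions: "finite (stable_partitions n lam f g)"
  by (rule finite_subset[OF _ finitely_many_partition_on[OF finite_ground]])
    (auto simp: stable_partitions_def half_type_def)

lemma card_stable_partitions_eq_sum:
  assumes "pairing n f" "pairing n g"
  shows "card (stable_partitions n nu g f)
    = (\<Sum>lam\<in>partitions n. if cycle_type (ground n) (f \<circ> g) = double_parts lam then Rbar lam nu else 0)"
proof -
  interpret two_pairings "ground n" f g by (rule pairing_two_pairings[OF assms])
  define lam0 where "lam0 = rev (sorted_list_of_multiset half_block_sizes)"
  have lam0: "lam0 \<in> partitions n"
    using is_partition_half_block_sizes card_ground unfolding lam0_def partitions_def by simp
  have "cycle_type (ground n) (f \<circ> g) = double_parts lam0"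
    using cycle_type_s unfolding s_def double_parts_def lam0_def by simp
  then have "(\<Sum>lam\<in>partitions n. if cycle_type (ground n) (f \<circ> g) = double_parts lam then Rbar lam nu else 0)
      = (\<Sum>lam\<in>partitions n. if lam = lam0 then Rbar lam nu else 0)"
    using lam0 double_parts_inj unfolding partitions_def by (intro sum.cong) auto
  also have "\<dots> = Rbar lam0 nu"
    using lam0 finite_partitions by simp
  also have "\<dots> = card (stable_partitions n nu g f)"
    using card_stable_partitions_eq_Rbar[of lam0 nu]
    unfolding stable_partitions_def half_type_def lam0_def by simp
  finally show ?thesis ..
qed

lemma LP_eq_sum_pairings:
  "LP n nu rho = (\<Sum>f | pairing n f. card (stable_partitions n nu (f1 n) f) * card (stable_partitions n rho (f2 n) f))"
proof -
  have "LP n nu rho = card (SIGMA f:{f. pairing n f}. stable_partitions n nu (f1 n) f \<times> stable_partitions n rho (f2 n) f)"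
    unfolding LP_def stable_partitions_def by (rule arg_cong[where f = card]) auto
  then show ?thesis
    using finite_pairings finite_stable_partitions by (simp add: card_cartesian_product)
qed

lemma sum_pairings_eq_sum_L:
  fixes x y :: "nat list \<Rightarrow> nat"
  shows "(\<Sum>f | pairing n f.
      (\<Sum>lam\<in>partitions n. if cycle_type (ground n) (f \<circ> f1 n) = double_parts lam then x lam else 0)
    * (\<Sum>mu\<in>partitions n. if cycle_type (ground n) (f \<circ> f2 n) = double_parts mu then y mu else 0))
    = (\<Sum>lam\<in>partitions n. \<Sum>mu\<in>partitions n. x lam * y mu * L n lam mu)"
proof -
  define C where "C lam mu f \<longleftrightarrow>
    cycle_type (ground n) (f \<circ> f1 n) = double_parts lam \<and> cycle_type (ground n) (f \<circ> f2 n) = double_parts mu"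
    for lam mu f
  have "(\<Sum>f | pairing n f.
      (\<Sum>lam\<in>partitions n. if cycle_type (ground n) (f \<circ> f1 n) = double_parts lam then x lam else 0)
    * (\<Sum>mu\<in>partitions n. if cycle_type (ground n) (f \<circ> f2 n) = double_parts mu then y mu else 0))
    = (\<Sum>f | pairing n f. \<Sum>lam\<in>partitions n. \<Sum>mu\<in>partitions n. if C lam mu f then x lam * y mu else 0)"
    unfolding sum_product C_def by (intro sum.cong refl) auto
  also have "\<dots> = (\<Sum>lam\<in>partitions n. \<Sum>f | pairing n f. \<Sum>mu\<in>partitions n. if C lam mu f then x lam * y mu else 0)"
    by (rule sum.swap)
  also have "\<dots> = (\<Sum>lam\<in>partitions n. \<Sum>mu\<in>partitions n. \<Sum>f | pairing n f. if C lam mu f then x lam * y mu else 0)"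
    by (rule sum.cong[OF refl], rule sum.swap)
  also have "\<dots> = (\<Sum>lam\<in>partitions n. \<Sum>mu\<in>partitions n. x lam * y mu * L n lam mu)"
  proof (intro sum.cong refl)
    fix lam mu
    have "(\<Sum>f | pairing n f. if C lam mu f then x lam * y mu else 0)
        = (\<Sum>f | pairing n f \<and> C lam mu f. x lam * y mu)"
      using sum.inter_filter[OF finite_pairings, where g = "\<lambda>_. x lam * y mu" and P = "C lam mu"] by simp
    also have "\<dots> = x lam * y mu * L n lam mu" by (simp add: L_def C_def)
    finally show "(\<Sum>f | pairing n f. if C lam mu f then x lam * y mu else 0) = x lam * y mu * L n lam mu" .
  qed
  finally show ?thesis .
qed

theorem proposition1:
  fixes n :: nat and nu rho :: "nat list"
  assumes "n \<ge> 1" and "is_partition n nu" and "is_partition n rho"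
  shows "LP n nu rho =
    (\<Sum>lam\<in>partitions n. \<Sum>mu\<in>partitions n. Rbar lam nu * Rbar mu rho * L n lam mu)"
proof -
  have "LP n nu rho
      = (\<Sum>f | pairing n f. card (stable_partitions n nu (f1 n) f) * card (stable_partitions n rho (f2 n) f))"
    by (rule LP_eq_sum_pairings)
  also have "\<dots> = (\<Sum>f | pairing n f.
      (\<Sum>lam\<in>partitions n. if cycle_type (ground n) (f \<circ> f1 n) = double_parts lam then Rbar lam nu else 0)
    * (\<Sum>mu\<in>partitions n. if cycle_type (ground n) (f \<circ> f2 n) = double_parts mu then Rbar mu rho else 0))"
    using card_stable_partitions_eq_sum pairing_f1 pairing_f2 by (intro sum.cong) auto
  also have "\<dots> = (\<Sum>lam\<in>partitions n. \<Sum>mu\<in>partitions n. Rbar lam nu * Rbar mu rho * L n lam mu)"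
    by (rule sum_pairings_eq_sum_L)
  finally show ?thesis .
qed

end
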